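(* Let $P$ be the transition matrix of a reducible classical Markov chain on a countable state space $\Lambda$, and consider the associated OQRW with $\mathcal H=\mathbb C$, $\mathcal K=\ell^2(\Lambda)$, $B^i_j=\sqrt{P(j,i)}U^i_j$ ($|U^i_j|=1$). Then there exists an initial probability measure $\rho^{(0)}$ on $\Lambda$ such that the QMC $(\rho^{(0)},(\mathcal E^{(n)})_{n\ge0})$ associated with this OQRW is reducible.
   Context: A stochastic matrix $P$ has nonnegative entries with $\sum_jP(i,j)=1$. $i\to j$ means $P^n(i,j)>0$ for some $n\in\mathbb N$; the chain is irreducible if $i\to j$ and $j\to i$ for all $i,j\in\Lambda$, and reducible otherwise. States of $\mathcal B$ are probability measures $\rho=(\rho_i)$ identified with $\sum_i\rho_i|i\rangle\langle i|$. The OQRW: $\mathcal M(\rho)=\sum_i(\sum_jB^i_j\rho_j\overline{B^i_j})|i\rangle\langle i|$, $\rho^{(n)}=\mathcal M^n(\rho^{(0)})$, $\Lambda(\rho^{(n)})=\{i:\rho^{(n)}_i\ne0\}$, $M^i_j=B^i_j|i\rangle\langle j|$. $\mathcal B$ is the commutative algebra of bounded diagonal operators $x=\sum_jx_j|j\rangle\langle j|$ on $\ell^2(\Lambda)$, $\mathcal A=\bigotimes_{k\in\mathbb Z_+}\mathcal B$. Transition expectations: $\mathcal E^{(n)}(x\otimes y)=\sum_{j\in\Lambda(\rho^{(n)})}\sum_i\frac{\mathrm{Tr}((\rho^{(n)}_j|j\rangle\langle j|)x)}{\rho^{(n)}_j}{M^i_j}^*yM^i_j$ (equivalently $\mathcal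 E^{(n)}(x\otimes y)=P_{\rho^{(n)}}xPy$ with $P_{\rho^{(n)}}$ the indicator of the support of $\rho^{(n)}$ and $(Py)_j=\sum_iP(j,i)y_i$). $\bar b(n)$ is the strong limit as $k\to\infty$ of $\mathcal E^{(n)}(I\otimes\cdots\otimes\mathcal E^{(n+k)}(I\otimes I))$; $E_{0]}(a_0\otimes\cdots\otimes a_n\otimes I\otimes\cdots)=\mathcal E^{(0)}(a_0\otimes\cdots\otimes\mathcal E^{(n)}(a_n\otimes\bar b(n+1)))$, extended to $\mathcal A$ by limits. The QMC is reducible if there exist a projection $p\in\mathcal B$, $p\ne0,I$, and $n_0$ with $E_{0]}(p_{[n_0}ap_{[n_0})=E_{0]}(a)$ for all $a\in\mathcal A$, where $p_{[n}=I\otimes\cdots\otimes I\otimes p\otimes p\otimes\cdots$ ($p$ from the $n$-th position on); otherwise irreducible. *)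

theory Defs
  imports "HOL-Analysis.Analysis"
begin

definition stochastic :: "('a \<Rightarrow> 'a \<Rightarrow> real) \<Rightarrow> bool" where
  "stochastic P \<longleftrightarrow> (\<forall>i j. 0 \<le> P i j) \<and> (\<forall>i. ((\<lambda>j. P i j) has_sum 1) UNIV)"

fun mpow :: "('a \<Rightarrow> 'a \<Rightarrow> real) \<Rightarrow> nat \<Rightarrow> 'a \<Rightarrow> 'a \<Rightarrow> real" where
  "mpow P 0 i j = (if i = j then 1 else 0)"
| "mpow P (Suc n) i j = (\<Sum>\<^sub>\<infinity>k. mpow P n i k * P k j)"

definition leadsto :: "('a \<Rightarrow> 'a \<Rightarrow> real) \<Rightarrow> 'a \<Rightarrow> 'a \<Rightarrow> bool" where
  "leadsto P i j \<longleftrightarrow> (\<exists>n\<ge>1. 0 < mpow P n i j)"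

definition irreducible_chain :: "('a \<Rightarrow> 'a \<Rightarrow> real) \<Rightarrow> bool" where
  "irreducible_chain P \<longleftrightarrow> (\<forall>i j. leadsto P i j \<and> leadsto P j i)"

definition oqrwB :: "('a \<Rightarrow> 'a \<Rightarrow> real) \<Rightarrow> ('a \<Rightarrow> 'a \<Rightarrow> complex) \<Rightarrow> 'a \<Rightarrow> 'a \<Rightarrow> complex" where
  "oqrwB P U i j = complex_of_real (sqrt (P j i)) * U i j"

text \<open>rho^(n) = M^n(rho^(0)); a diagonal state is stored as its diagonal.\<close>
fun rho :: "('a \<Rightarrow> 'a \<Rightarrow> real) \<Rightarrow> ('a \<Rightarrow> 'a \<Rightarrow> complex) \<Rightarrow> ('a \<Rightarrow> real) \<Rightarrow> nat \<Rightarrow> 'a \<Rightarrow> complex" where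
  "rho P U r0 0 i = complex_of_real (r0 i)"
| "rho P U r0 (Suc n) i =
     (\<Sum>\<^sub>\<infinity>j. oqrwB P U i j * rho P U r0 n j * cnj (oqrwB P U i j))"

text \<open>Transition expectation E^(n)(x \<otimes> y), diagonal operators stored as diagonals:
  sum over j in Lambda(rho^(n)) and i of (Tr(rho_j |j><j| x)/rho_j) (M^i_j)^* y M^i_j.\<close>
definition Etr :: "('a \<Rightarrow> 'a \<Rightarrow> real) \<Rightarrow> ('a \<Rightarrow> 'a \<Rightarrow> complex) \<Rightarrow> ('a \<Rightarrow> real) \<Rightarrow> nat
    \<Rightarrow> ('a \<Rightarrow> complex) \<Rightarrow> ('a \<Rightarrow> complex) \<Rightarrow> ('a \<Rightarrow> complex)" where
  "Etr P U r0 n x y = (\<lambda>j. if rho P U r0 n j \<noteq> 0 then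
      (\<Sum>\<^sub>\<infinity>i. (rho P U r0 n j * x j / rho P U r0 n j) *
                 (cnj (oqrwB P U i j) * y i * oqrwB P U i j))
    else 0)"

text \<open>chainE n k = E^(n)(I \<otimes> E^(n+1)(I \<otimes> ... E^(n+k)(I \<otimes> I))).\<close>
fun chainE :: "('a \<Rightarrow> 'a \<Rightarrow> real) \<Rightarrow> ('a \<Rightarrow> 'a \<Rightarrow> complex) \<Rightarrow> ('a \<Rightarrow> real) \<Rightarrow> nat \<Rightarrow> nat \<Rightarrow> 'a \<Rightarrow> complex" where
  "chainE P U r0 n 0 = Etr P U r0 n (\<lambda>_. 1) (\<lambda>_. 1)"
| "chainE P U r0 n (Suc k) = Etr P U r0 n (\<lambda>_. 1) (chainE P U r0 (Suc n) k)"

text \<open>bbar(n): strong limit of diagonal operators = entrywise limit.\<close>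
definition bbar :: "('a \<Rightarrow> 'a \<Rightarrow> real) \<Rightarrow> ('a \<Rightarrow> 'a \<Rightarrow> complex) \<Rightarrow> ('a \<Rightarrow> real) \<Rightarrow> nat \<Rightarrow> 'a \<Rightarrow> complex" where
  "bbar P U r0 n = (\<lambda>j. lim (\<lambda>k. chainE P U r0 n k j))"

text \<open>Enest a l d = E^(l)(a_l \<otimes> E^(l+1)(... E^(l+d)(a_(l+d) \<otimes> bbar(l+d+1)))).\<close>
fun Enest :: "('a \<Rightarrow> 'a \<Rightarrow> real) \<Rightarrow> ('a \<Rightarrow> 'a \<Rightarrow> complex) \<Rightarrow> ('a \<Rightarrow> real) \<Rightarrow> (nat \<Rightarrow> 'a \<Rightarrow> complex)
    \<Rightarrow> nat \<Rightarrow> nat \<Rightarrow> 'a \<Rightarrow> complex" where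
  "Enest P U r0 a l 0 = Etr P U r0 l (a l) (bbar P U r0 (Suc l))"
| "Enest P U r0 a l (Suc d) = Etr P U r0 l (a l) (Enest P U r0 a (Suc l) d)"

text \<open>E_{0]}(a_0 \<otimes> ... \<otimes> a_m \<otimes> I \<otimes> ...).\<close>
definition E0 :: "('a \<Rightarrow> 'a \<Rightarrow> real) \<Rightarrow> ('a \<Rightarrow> 'a \<Rightarrow> complex) \<Rightarrow> ('a \<Rightarrow> real) \<Rightarrow> (nat \<Rightarrow> 'a \<Rightarrow> complex)
    \<Rightarrow> nat \<Rightarrow> 'a \<Rightarrow> complex" where
  "E0 P U r0 a m = Enest P U r0 a 0 m"

definition extI :: "(nat \<Rightarrow> 'a \<Rightarrow> complex) \<Rightarrow> nat \<Rightarrow> nat \<Rightarrow> 'a \<Rightarrow> complex" where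
  "extI a m = (\<lambda>k. if k \<le> m then a k else (\<lambda>_. 1))"

definition pcut :: "('a \<Rightarrow> complex) \<Rightarrow> nat \<Rightarrow> (nat \<Rightarrow> 'a \<Rightarrow> complex) \<Rightarrow> nat \<Rightarrow> 'a \<Rightarrow> complex" where
  "pcut p n0 b = (\<lambda>k j. if n0 \<le> k then p j * b k j * p j else b k j)"

text \<open>Reducibility of the QMC; E_{0]}(p_{[n0} a p_{[n0}) is the limit of E_{0]} applied to
  the truncations p_{[n0,N]} a p_{[n0,N]}, for local elementary tensors a.\<close>
definition qmc_reducible :: "('a \<Rightarrow> 'a \<Rightarrow> real) \<Rightarrow> ('a \<Rightarrow> 'a \<Rightarrow> complex) \<Rightarrow> ('a \<Rightarrow> real) \<Rightarrow> bool" where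
  "qmc_reducible P U r0 \<longleftrightarrow>
    (\<exists>(p :: 'a \<Rightarrow> complex) (n0 :: nat).
       (\<forall>j. cnj (p j) = p j \<and> p j * p j = p j) \<and> p \<noteq> (\<lambda>_. 0) \<and> p \<noteq> (\<lambda>_. 1) \<and>
       (\<forall>(a :: nat \<Rightarrow> 'a \<Rightarrow> complex) (m :: nat).
          (\<forall>k\<le>m. bounded (range (a k))) \<longrightarrow>
          (\<forall>j. (\<lambda>N. E0 P U r0 (pcut p n0 (extI a m)) N j) \<longlonglongrightarrow> E0 P U r0 a m j)))"

end

theory Submission
  imports Defs
begin

(* Since P is reducible, some state j0 is not accessible from some state i0; start the
   walk in the point mass at i0. Then rho(n) = P^n(i0, .), so from time 1 on every rho(n)
   is supported in the set of states accessible from i0, whose indicator p is a projection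
   different from 0 (i0 has a successor) and from I (j0 is missing). The transition
   expectation E(n) only sees its first argument on the support of rho(n), so compressing
   by p from position 1 on does not change E_0]. Because the supports are moreover mapped
   into each other by P, E(n)(I x P_rho(n+1)) = P_rho(n); hence bbar(n) = P_rho(n), and the
   truncated values of E_0] are eventually constant. *)

lemma has_sum_point_mass: "((\<lambda>j. if j = c then v else 0) has_sum v) UNIV"
  by (rule has_sum_finite_neutralI[of "{c}"]) auto

lemma stochastic_nonneg: "stochastic P \<Longrightarrow> 0 \<le> P i j"
  by (simp add: stochastic_def)

lemma stochastic_row_has_sum: "stochastic P \<Longrightarrow> ((\<lambda>j. P i j) has_sum 1) UNIV"
  by (simp add: stochastic_def)

lemma stochastic_le_1:
  assumes "stochastic P"
  shows "P i j \<le> 1"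
  using finite_sum_le_has_sum[OF stochastic_row_has_sum[OF assms], of "{j}"]
  by (simp add: stochastic_nonneg[OF assms])

lemma stochastic_row_ex_pos:
  assumes "stochastic P"
  shows "\<exists>j. 0 < P i j"
proof (rule ccontr)
  assume "\<nexists>j. 0 < P i j"
  then have "P i = (\<lambda>_. 0)"
    using stochastic_nonneg[OF assms] by (force simp: fun_eq_iff not_less intro: antisym)
  with stochastic_row_has_sum[OF assms, of i] show False
    using has_sum_unique[OF _ has_sum_0_simp] by fastforce
qed

lemma column_summable_stochastic:
  assumes "stochastic P" "q summable_on UNIV" "\<And>j. 0 \<le> q j"
  shows "(\<lambda>j. q j * P j k) summable_on UNIV"
proof (rule summable_on_comparison_test[OF assms(2)])
  show "q j * P j k \<le> q j" "0 \<le> q j * P j k" for j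
    using assms(3)[of j] stochastic_nonneg[OF assms(1)] stochastic_le_1[OF assms(1)]
    by (simp_all add: mult_left_le)
qed

text \<open>Tonelli for the nonnegative double series \<open>\<Sum>\<^sub>j \<Sum>\<^sub>k q j * P j k\<close>.\<close>
lemma has_sum_vector_mult_stochastic:
  assumes P: "stochastic P" and q: "(q has_sum s) UNIV" and q_nonneg: "\<And>j. 0 \<le> q j"
  shows "((\<lambda>k. \<Sum>\<^sub>\<infinity>j. q j * P j k) has_sum s) UNIV"
proof -
  let ?f = "\<lambda>(j, k). q j * P j k"
  have rows: "((\<lambda>k. ?f (j, k)) has_sum q j) UNIV" for j
    using has_sum_cmult_right[OF stochastic_row_has_sum[OF P], where c = "q j"] by simp
  have "?f summable_on UNIV \<times> UNIV"
    using rows q q_nonneg stochastic_nonneg[OF P]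
    by (intro summable_on_SigmaI[where g = q]) (auto simp: summable_on_def)
  then have "(?f has_sum s) (UNIV \<times> UNIV)"
    using rows q by (intro has_sum_SigmaI) auto
  then have swapped: "((\<lambda>(k, j). q j * P j k) has_sum s) (UNIV \<times> UNIV)"
    by (subst (asm) has_sum_swap) simp
  have columns: "((\<lambda>j. q j * P j k) has_sum (\<Sum>\<^sub>\<infinity>j. q j * P j k)) UNIV" for k
    using column_summable_stochastic[OF P has_sum_imp_summable[OF q] q_nonneg]
    by (simp add: summable_iff_has_sum_infsum)
  show ?thesis
    using has_sum_SigmaD[OF swapped, where g = "\<lambda>k. \<Sum>\<^sub>\<infinity>j. q j * P j k"] columns
    by simp
qed

lemma stochastic_mpow:
  assumes P: "stochastic P"
  shows "stochastic (mpow P n)"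
proof (induction n)
  case 0
  have "mpow P 0 i = (\<lambda>k. if k = i then 1 else 0)" for i
    by (auto simp: fun_eq_iff)
  then show ?case
    by (simp add: stochastic_def has_sum_point_mass)
next
  case (Suc n)
  then have row: "(mpow P n i has_sum 1) UNIV" and nonneg: "0 \<le> mpow P n i j" for i j
    by (simp_all add: stochastic_def)
  have "mpow P (Suc n) i = (\<lambda>k. \<Sum>\<^sub>\<infinity>j. mpow P n i j * P j k)" for i
    by (rule ext) simp
  moreover have "0 \<le> mpow P (Suc n) i k" for i k
    using nonneg stochastic_nonneg[OF P] by (simp add: infsum_nonneg)
  ultimately show ?case
    using has_sum_vector_mult_stochastic[OF P row nonneg] by (simp add: stochastic_def)
qed

lemma mpow_1: "mpow P 1 i k = P i k"
proof -
  have "(\<lambda>j. mpow P 0 i j * P j k) = (\<lambda>j. if j = i then P i k else 0)"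
    by (auto simp: fun_eq_iff)
  then have "((\<lambda>j. mpow P 0 i j * P j k) has_sum P i k) UNIV"
    using has_sum_point_mass by metis
  then show ?thesis
    by (simp add: infsumI)
qed

lemma leadsto_if_pos: "0 < P i k \<Longrightarrow> leadsto P i k"
  unfolding leadsto_def by (metis mpow_1 order_refl)

lemma has_sum_mpow_Suc:
  assumes P: "stochastic P"
  shows "((\<lambda>j. mpow P n i j * P j k) has_sum mpow P (Suc n) i k) UNIV"
proof -
  have "mpow P n i summable_on UNIV" "\<And>j. 0 \<le> mpow P n i j"
    using stochastic_mpow[OF P, of n] by (auto simp: stochastic_def summable_on_def)
  then have "(\<lambda>j. mpow P n i j * P j k) summable_on UNIV"
    by (rule column_summable_stochastic[OF P])
  then show ?thesis
    by (simp add: summable_iff_has_sum_infsum)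
qed

lemma mpow_Suc_pos:
  assumes P: "stochastic P" and "0 < mpow P n i j" "0 < P j k"
  shows "0 < mpow P (Suc n) i k"
proof -
  have "mpow P n i j * P j k \<le> mpow P (Suc n) i k"
    using finite_sum_le_has_sum[OF has_sum_mpow_Suc[OF P], where B = "{j}"]
      stochastic_nonneg[OF stochastic_mpow[OF P]] stochastic_nonneg[OF P] by simp
  with assms(2,3) show ?thesis
    by (meson mult_pos_pos order_less_le_trans)
qed

lemma oqrwB_mult_cnj:
  assumes "0 \<le> P j i" "cmod (U i j) = 1"
  shows "oqrwB P U i j * cnj (oqrwB P U i j) = of_real (P j i)"
proof -
  have "U i j * cnj (U i j) = 1"
    using complex_norm_square[of "U i j"] assms(2) by simp
  then show ?thesis
    using assms(1) by (simp add: oqrwB_def algebra_simps flip: of_real_mult)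
qed

lemma rho_point_mass:
  assumes P: "stochastic P" and U: "\<forall>i j. cmod (U i j) = 1"
  shows "rho P U (\<lambda>k. if k = i0 then 1 else 0) n k = of_real (mpow P n i0 k)"
proof (induction n arbitrary: k)
  case 0
  then show ?case by simp
next
  case (Suc n)
  have "((\<lambda>j. complex_of_real (mpow P n i0 j * P j k))
      has_sum complex_of_real (mpow P (Suc n) i0 k)) UNIV"
    by (rule has_sum_of_real[OF has_sum_mpow_Suc[OF P]])
  moreover have "oqrwB P U k j * rho P U (\<lambda>k. if k = i0 then 1 else 0) n j * cnj (oqrwB P U k j)
      = of_real (mpow P n i0 j * P j k)" for j
    using oqrwB_mult_cnj[of P j k U] stochastic_nonneg[OF P] U Suc.IH
    by (simp add: ac_simps)
  ultimately show ?case
    by (simp add: infsumI)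
qed

lemma rho_point_mass_neq_0_iff:
  assumes P: "stochastic P" and U: "\<forall>i j. cmod (U i j) = 1"
  shows "rho P U (\<lambda>k. if k = i0 then 1 else 0) n k \<noteq> 0 \<longleftrightarrow> 0 < mpow P n i0 k"
  using rho_point_mass[OF P U] stochastic_nonneg[OF stochastic_mpow[OF P]]
  by (auto simp: order_less_le)

lemma rho_point_mass_support_closed:
  assumes P: "stochastic P" and U: "\<forall>i j. cmod (U i j) = 1"
    and "rho P U (\<lambda>k. if k = i0 then 1 else 0) n j \<noteq> 0" "P j i \<noteq> 0"
  shows "rho P U (\<lambda>k. if k = i0 then 1 else 0) (Suc n) i \<noteq> 0"
proof -
  have "0 < P j i"
    using assms(4) stochastic_nonneg[OF P, of j i] by simp
  with mpow_Suc_pos[OF P] assms(3) show ?thesis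
    unfolding rho_point_mass_neq_0_iff[OF P U] by blast
qed

definition supp_proj :: "('a \<Rightarrow> 'a \<Rightarrow> real) \<Rightarrow> ('a \<Rightarrow> 'a \<Rightarrow> complex) \<Rightarrow> ('a \<Rightarrow> real) \<Rightarrow> nat
    \<Rightarrow> 'a \<Rightarrow> complex" where
  "supp_proj P U r0 n = (\<lambda>j. if rho P U r0 n j \<noteq> 0 then 1 else 0)"

lemma Etr_eq_transition:
  assumes P: "stochastic P" and U: "\<forall>i j. cmod (U i j) = 1"
  shows "Etr P U r0 n x y j =
    (if rho P U r0 n j \<noteq> 0 then x j * (\<Sum>\<^sub>\<infinity>i. of_real (P j i) * y i) else 0)"
proof (cases "rho P U r0 n j = 0")
  case False
  have sandwich: "cnj (oqrwB P U i j) * y i * oqrwB P U i j = of_real (P j i) * y i" for i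
    using oqrwB_mult_cnj[of P j i U] stochastic_nonneg[OF P] U by (simp add: ac_simps)
  from False have "Etr P U r0 n x y j = x j * (\<Sum>\<^sub>\<infinity>i. cnj (oqrwB P U i j) * y i * oqrwB P U i j)"
    by (simp add: Etr_def infsum_cmult_right')
  also have "\<dots> = x j * (\<Sum>\<^sub>\<infinity>i. of_real (P j i) * y i)"
    by (simp only: sandwich)
  finally show ?thesis
    using False by simp
qed (simp add: Etr_def)

lemma Etr_unit_left:
  assumes P: "stochastic P" and U: "\<forall>i j. cmod (U i j) = 1"
    and y: "\<And>i. rho P U r0 n j \<noteq> 0 \<Longrightarrow> P j i \<noteq> 0 \<Longrightarrow> y i = 1"
  shows "Etr P U r0 n (\<lambda>_. 1) y j = supp_proj P U r0 n j"
proof (cases "rho P U r0 n j = 0")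
  case False
  then have "(\<Sum>\<^sub>\<infinity>i. of_real (P j i) * y i) = (\<Sum>\<^sub>\<infinity>i. of_real (P j i) :: complex)"
    using y by (intro infsum_cong) auto
  also have "\<dots> = 1"
    using infsumI[OF has_sum_of_real[OF stochastic_row_has_sum[OF P]]] by simp
  finally show ?thesis
    using False by (simp add: Etr_eq_transition[OF P U] supp_proj_def)
qed (simp add: Etr_def supp_proj_def)

lemma Etr_cong:
  "(\<And>j. rho P U r0 n j \<noteq> 0 \<Longrightarrow> x j = x' j) \<Longrightarrow> Etr P U r0 n x y = Etr P U r0 n x' y"
  by (auto simp: Etr_def)

lemma Enest_cong:
  "(\<And>l j. rho P U r0 l j \<noteq> 0 \<Longrightarrow> a l j = b l j) \<Longrightarrow> Enest P U r0 a l d = Enest P U r0 b l d"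
proof (induction d arbitrary: l)
  case 0
  show ?case
    unfolding Enest.simps by (rule Etr_cong) (rule 0)
next
  case (Suc d)
  have tail: "Enest P U r0 a (Suc l) d = Enest P U r0 b (Suc l) d"
    by (rule Suc.IH) (rule Suc.prems)
  show ?case
    unfolding Enest.simps tail by (rule Etr_cong) (rule Suc.prems)
qed

context
  fixes P :: "'a \<Rightarrow> 'a \<Rightarrow> real" and U :: "'a \<Rightarrow> 'a \<Rightarrow> complex" and r0 :: "'a \<Rightarrow> real"
  assumes stochastic: "stochastic P" and unimodular: "\<forall>i j. cmod (U i j) = 1"
    and support_closed: "\<And>n j i. rho P U r0 n j \<noteq> 0 \<Longrightarrow> P j i \<noteq> 0 \<Longrightarrow> rho P U r0 (Suc n) i \<noteq> 0"
begin

lemma Etr_unit_supp_proj: "Etr P U r0 n (\<lambda>_. 1) (supp_proj P U r0 (Suc n)) = supp_proj P U r0 n"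
  by (rule ext, rule Etr_unit_left[OF stochastic unimodular])
    (auto simp: supp_proj_def dest: support_closed)

lemma chainE_eq_supp_proj: "chainE P U r0 n k = supp_proj P U r0 n"
proof (induction k arbitrary: n)
  case 0
  show ?case
    unfolding chainE.simps by (rule ext, rule Etr_unit_left[OF stochastic unimodular]) simp
next
  case (Suc k)
  then show ?case
    by (simp add: Etr_unit_supp_proj)
qed

lemma bbar_eq_supp_proj: "bbar P U r0 n = supp_proj P U r0 n"
  by (simp add: bbar_def chainE_eq_supp_proj)

lemma Enest_unit_tail:
  "(\<And>k. l \<le> k \<Longrightarrow> a k = (\<lambda>_. 1)) \<Longrightarrow> Enest P U r0 a l d = supp_proj P U r0 l"
  by (induction d arbitrary: l) (simp_all add: bbar_eq_supp_proj Etr_unit_supp_proj)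

lemma Enest_extI:
  "l \<le> m \<Longrightarrow> m \<le> l + d \<Longrightarrow> Enest P U r0 (extI a m) l d = Enest P U r0 a l (m - l)"
proof (induction d arbitrary: l)
  case 0
  then show ?case
    by (simp add: extI_def)
next
  case (Suc d)
  show ?case
  proof (cases "l = m")
    case True
    then have "Enest P U r0 (extI a m) (Suc l) d = supp_proj P U r0 (Suc l)"
      by (intro Enest_unit_tail) (auto simp: extI_def)
    with True show ?thesis
      by (simp add: extI_def bbar_eq_supp_proj)
  next
    case False
    then have "m - l = Suc (m - Suc l)"
      using Suc.prems by simp
    with Suc False show ?thesis
      by (simp add: extI_def)
  qed
qed

lemma qmc_reducibleI:
  fixes p :: "'a \<Rightarrow> complex"
  assumes proj: "\<And>j. p j = 0 \<or> p j = 1" and "p \<noteq> (\<lambda>_. 0)" "p \<noteq> (\<lambda>_. 1)"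
    and supp: "\<And>l j. start \<le> l \<Longrightarrow> rho P U r0 l j \<noteq> 0 \<Longrightarrow> p j = 1"
  shows "qmc_reducible P U r0"
  unfolding qmc_reducible_def
proof (intro exI[of _ p] exI[of _ start] conjI allI impI)
  show "cnj (p j) = p j" "p j * p j = p j" for j
    using proj[of j] by auto
  show "p \<noteq> (\<lambda>_. 0)" "p \<noteq> (\<lambda>_. 1)"
    by fact+
  fix a m j
  have "E0 P U r0 (pcut p start (extI a m)) N = E0 P U r0 a m" if "m \<le> N" for N
  proof -
    have "E0 P U r0 (pcut p start (extI a m)) N = Enest P U r0 (extI a m) 0 N"
      unfolding E0_def by (rule Enest_cong) (auto simp: pcut_def dest: supp)
    also have "\<dots> = Enest P U r0 a 0 m"
      using Enest_extI[of 0 m N] that by simp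
    finally show ?thesis
      by (simp add: E0_def)
  qed
  then show "(\<lambda>N. E0 P U r0 (pcut p start (extI a m)) N j) \<longlonglongrightarrow> E0 P U r0 a m j"
    by (intro tendsto_eventually eventually_sequentiallyI[of m]) auto
qed

end

theorem mainTheorem13:
  fixes P :: "'a::countable \<Rightarrow> 'a \<Rightarrow> real"
    and U :: "'a \<Rightarrow> 'a \<Rightarrow> complex"
  assumes "stochastic P"
    and "\<not> irreducible_chain P"
    and "\<forall>i j. cmod (U i j) = 1"
  shows "\<exists>r0 :: 'a \<Rightarrow> real. (\<forall>i. 0 \<le> r0 i) \<and> (r0 has_sum 1) UNIV \<and> qmc_reducible P U r0"
proof -
  obtain i0 j0 where not_leadsto: "\<not> leadsto P i0 j0"
    using assms(2) by (auto simp: irreducible_chain_def)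
  define r0 :: "'a \<Rightarrow> real" where "r0 = (\<lambda>k. if k = i0 then 1 else 0)"
  define p :: "'a \<Rightarrow> complex" where "p = (\<lambda>k. if leadsto P i0 k then 1 else 0)"
  obtain k where "0 < P i0 k"
    using stochastic_row_ex_pos[OF assms(1)] by blast
  then have "p k = 1"
    by (simp add: p_def leadsto_if_pos)
  moreover have "p j0 = 0"
    using not_leadsto by (simp add: p_def)
  ultimately have "p \<noteq> (\<lambda>_. 0)" "p \<noteq> (\<lambda>_. 1)"
    by auto
  moreover have "p j = 0 \<or> p j = 1" for j
    by (simp add: p_def)
  moreover have "p j = 1" if "1 \<le> l" "rho P U r0 l j \<noteq> 0" for l j
    using that rho_point_mass_neq_0_iff[OF assms(1,3)] by (auto simp: r0_def p_def leadsto_def)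
  ultimately have "qmc_reducible P U r0"
    using qmc_reducibleI[of P U r0 p 1] assms(1,3) rho_point_mass_support_closed[OF assms(1,3)]
    unfolding r0_def by blast
  moreover have "\<forall>i. 0 \<le> r0 i" "(r0 has_sum 1) UNIV"
    unfolding r0_def by (simp_all add: has_sum_point_mass)
  ultimately show ?thesis
    by blast
qed

end
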